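(* Let $d\in\mathbb{N}$ and $0<\eta<1/d$. Then $\mathcal{D}(\eta)^c\setminus K_d^c\subseteq S(\omega)$ for every $\omega$ with $0<\omega<1/(d\eta+d-1)$.
   Context: For $\boldsymbol{x}\in\mathbb{R}^d$, $|\boldsymbol{x}|=\max_i|x_i|$ and $\|\boldsymbol{x}\|=\min_{\boldsymbol{p}\in\mathbb{Z}^d}|\boldsymbol{x}-\boldsymbol{p}|$. For $\boldsymbol{\alpha}\in\mathbb{R}^d$, let $\mathcal{A}_\eta(\boldsymbol{\alpha})$ be the set of accumulation points of $\{|q|^{\eta}(q\boldsymbol{\alpha}-\boldsymbol{p}):q\in\mathbb{Z}\setminus\{0\},\ \boldsymbol{p}\in\mathbb{Z}^d\}$, $\mathcal{D}(\eta)=\{\boldsymbol{\alpha}\in\mathbb{R}^d:\mathcal{A}_\eta(\boldsymbol{\alpha})=\mathbb{R}^d\}$ and $\mathcal{D}(\eta)^c=\mathbb{R}^d\setminus\mathcal{D}(\eta)$. $K_d$ is the set of $\boldsymbol{\alpha}\in\mathbb{R}^d$ with $1,\alpha_1,\dots,\alpha_d$ linearly independent over $\mathbb{Q}$, and $K_d^c=\mathbb{R}^d\setminus K_d$. For $\omega>0$, \[S(\omega)=\left\{\boldsymbol{\alpha}\in K_d:\lim_{Q\to\infty}Q^\omega\min_{0<q\le Q,\ q\in\mathbb{Z}}\|q\boldsymbol{\alpha}\|=0\right\}.\] *)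

theory Defs
  imports "HOL-Analysis.Analysis"
begin

text \<open>Vectors in R^d are modelled as real^'n with d = CARD('n).\<close>

definition supnorm :: "real^'n \<Rightarrow> real" where
  "supnorm x = Max (range (\<lambda>i. \<bar>x $ i\<bar>))"

definition intvecs :: "(real^'n) set" where
  "intvecs = {p. \<forall>i. p $ i \<in> \<int>}"

definition distZ :: "real^'n \<Rightarrow> real" where
  "distZ x = Inf {supnorm (x - p) | p. p \<in> intvecs}"

definition accA :: "real \<Rightarrow> real^'n \<Rightarrow> (real^'n) set" where
  "accA \<eta> \<alpha> = {x. x islimpt
      {(\<bar>real_of_int q\<bar> powr \<eta>) *\<^sub>R (real_of_int q *\<^sub>R \<alpha> - p) | q p.
          q \<noteq> 0 \<and> p \<in> intvecs}}"

definition Dset :: "real \<Rightarrow> (real^'n) set" where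
  "Dset \<eta> = {\<alpha>. accA \<eta> \<alpha> = UNIV}"

definition Kset :: "(real^'n) set" where
  "Kset = {\<alpha>. \<forall>c0 c. c0 \<in> \<rat> \<and> (\<forall>i. c i \<in> \<rat>) \<and> c0 + (\<Sum>i\<in>UNIV. c i * \<alpha> $ i) = 0
                 \<longrightarrow> c0 = 0 \<and> (\<forall>i. c i = 0)}"

definition Sset :: "real \<Rightarrow> (real^'n) set" where
  "Sset \<omega> = {\<alpha>. \<alpha> \<in> Kset \<and>
     (\<lambda>Q::nat. real Q powr \<omega> *
        Min {distZ (real_of_int q *\<^sub>R \<alpha>) | q::int. 0 < q \<and> q \<le> int Q}) \<longlonglongrightarrow> 0}"

end

theory Submission
  imports Defs
begin

text \<open>
  Suppose \<open>\<alpha> \<notin> S(\<omega>)\<close>. Then for some \<open>c > 0\<close> and infinitely many \<open>Q\<close> no \<open>q \<le> Q\<close> has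
  \<open>\<parallel>q\<alpha>\<parallel> < \<delta> = c Q^(-\<omega>)\<close>; we may take \<open>c \<le> 1\<close> and \<open>\<omega> \<ge> 1/d\<close>, since \<open>\<eta> < 1/d\<close> keeps
  \<open>\<omega>(d\<eta> + d - 1) < 1\<close>. For such \<open>Q\<close> the lattice of points \<open>(q/Q, (q\<alpha> - p)/\<delta>)\<close> in
  \<open>\<real>^(d+1)\<close> is \<open>1\<close>-separated, and the box principle puts many of its points in a cube of
  radius \<open>R \<approx> Q^(\<omega>d - 1)\<close>. Too many \<open>1\<close>-separated points of that cube cannot lie in a
  hyperplane, so they contain a basis, and rounding coordinates in that basis puts every
  point of \<open>\<real>^(d+1)\<close> within \<open>(d+1)R\<close> of the lattice. For the target
  \<open>(T/Q, T^(-\<eta>) x/\<delta>)\<close> with \<open>T = K(d+1)RQ\<close> this gives \<open>q \<approx> T\<close> and \<open>p\<close> such that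
  \<open>\<bar>q\<bar>^\<eta> (q\<alpha> - p)\<close> is within \<open>O(Q^(\<omega>(d\<eta> + d - 1) - 1)) + \<parallel>x\<parallel>/K\<close> of \<open>x\<close>.
  The exponent is negative exactly when \<open>\<omega> < 1/(d\<eta> + d - 1)\<close>, so every \<open>x\<close> is an
  accumulation point and \<open>\<alpha> \<in> D(\<eta>)\<close>. The hypothesis \<open>\<alpha> \<in> K\<^sub>d\<close> enters only through the
  definition of \<open>S(\<omega>)\<close>.
\<close>

section \<open>Separated point sets\<close>

lemma abs_component_lt_one_if_orthogonal:
  fixes n g :: "real^'m"
  assumes orth: "n \<bullet> g = 0" and max: "\<And>i. \<bar>n$i\<bar> \<le> \<bar>n$j\<bar>" and nz: "n$j \<noteq> 0"
    and small: "\<And>i. i \<noteq> j \<Longrightarrow> \<bar>g$i\<bar> < 1 / real CARD('m)"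
  shows "\<bar>g$i\<bar> < 1"
proof (cases "i = j")
  case False
  have "1 / real CARD('m) \<le> 1" by simp
  thus ?thesis using small[OF False] by linarith
next
  case True
  have "n$j * g$j + (\<Sum>i\<in>UNIV-{j}. n$i * g$i) = 0"
    using orth by (simp add: inner_vec_def sum.remove[of UNIV j])
  hence "\<bar>n$j\<bar> * \<bar>g$j\<bar> = \<bar>\<Sum>i\<in>UNIV-{j}. n$i * g$i\<bar>"
    by (metis abs_minus_cancel abs_mult add_eq_0_iff)
  also have "\<dots> \<le> \<bar>n$j\<bar> * (\<Sum>i\<in>UNIV-{j}. \<bar>g$i\<bar>)"
    unfolding sum_distrib_left
    by (rule order_trans[OF sum_abs sum_mono]) (simp add: abs_mult max mult_right_mono)
  finally have "\<bar>g$j\<bar> \<le> (\<Sum>i\<in>UNIV-{j}. \<bar>g$i\<bar>)" using nz by simp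
  also have "\<dots> \<le> real (card (UNIV - {j} :: 'm set)) * (1 / real CARD('m))"
    using small by (intro sum_bounded_above) (simp add: less_imp_le)
  also have "\<dots> < 1" by (simp add: card_Diff_singleton)
  finally show ?thesis using True by simp
qed

text \<open>Take \<open>j\<close> with \<open>\<bar>n$j\<bar>\<close> maximal. By the previous lemma, two points of the hyperplane whose
  other coordinates differ by less than \<open>1/m\<close> (\<open>m\<close> the dimension) differ by less than \<open>1\<close> in
  every coordinate, so on a \<open>1\<close>-separated set the map \<open>s \<mapsto> (\<lfloor>m s\<^sub>i\<rfloor>)\<^sub>i\<^sub>\<noteq>\<^sub>j\<close> is injective.\<close>

lemma card_separated_in_hyperplane_le:
  fixes S :: "(real^'m) set" and n :: "real^'m"
  assumes sep: "\<And>s t. s \<in> S \<Longrightarrow> t \<in> S \<Longrightarrow> s \<noteq> t \<Longrightarrow> \<exists>i. 1 \<le> \<bar>s$i - t$i\<bar>"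
    and bnd: "\<And>s i. s \<in> S \<Longrightarrow> \<bar>s$i\<bar> \<le> R"
    and nz: "n \<noteq> 0" and orth: "\<And>s. s \<in> S \<Longrightarrow> n \<bullet> s = 0"
  shows "card S \<le> nat (2 * \<lceil>real CARD('m) * R\<rceil> + 1) ^ (CARD('m) - 1)"
proof -
  define m where "m = real CARD('m)"
  have m: "m \<ge> 1" unfolding m_def by simp
  obtain j where jmax: "\<And>i. \<bar>n$i\<bar> \<le> \<bar>n$j\<bar>"
  proof -
    have "Max (range (\<lambda>i. \<bar>n$i\<bar>)) \<in> range (\<lambda>i. \<bar>n$i\<bar>)" by (rule Max_in) auto
    then obtain j where j: "\<bar>n$j\<bar> = Max (range (\<lambda>i. \<bar>n$i\<bar>))" by (metis imageE)
    show ?thesis by (rule that[of j]) (unfold j, rule Max_ge, auto)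
  qed
  have nj: "n$j \<noteq> 0"
  proof
    assume "n$j = 0"
    hence "n$i = 0" for i using jmax[of i] by simp
    thus False using nz by (simp add: vec_eq_iff)
  qed
  define K where "K = \<lceil>m * R\<rceil>"
  define key where "key s = (\<lambda>i. if i = j then 0 else \<lfloor>m * s$i\<rfloor>)" for s :: "real^'m"
  define C where "C = PiE UNIV (\<lambda>i. if i = j then {0} else {-K..K})"
  have "key ` S \<subseteq> C"
  proof -
    have "\<lfloor>m * s$i\<rfloor> \<in> {-K..K}" if "s \<in> S" for s i
    proof -
      have "\<bar>m * s$i\<bar> \<le> m * R"
        using bnd[OF that] m by (simp add: abs_mult mult_left_mono)
      thus ?thesis unfolding K_def by (simp add: abs_le_iff) linarith
    qed
    thus ?thesis unfolding key_def C_def by auto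
  qed
  moreover have "inj_on key S"
  proof (rule inj_onI, rule ccontr)
    fix s t assume s: "s \<in> S" and t: "t \<in> S" and same: "key s = key t" and "s \<noteq> t"
    have "\<bar>(s - t)$i\<bar> < 1 / m" if "i \<noteq> j" for i
    proof -
      have "\<lfloor>m * s$i\<rfloor> = \<lfloor>m * t$i\<rfloor>" using same that unfolding key_def by meson
      hence "\<bar>m * s$i - m * t$i\<bar> < 1" by linarith
      hence "m * \<bar>(s - t)$i\<bar> < 1" using m by (simp add: right_diff_distrib[symmetric] abs_mult)
      thus ?thesis using m by (simp add: field_simps)
    qed
    hence "\<bar>(s - t)$i\<bar> < 1" for i
      using orth[OF s] orth[OF t] jmax nj unfolding m_def
      by (intro abs_component_lt_one_if_orthogonal[of n]) (auto simp: inner_diff_right)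
    thus False using sep[OF s t \<open>s \<noteq> t\<close>] by (metis not_less vector_minus_component)
  qed
  moreover have "finite C" unfolding C_def by (intro finite_PiE) auto
  ultimately have "card S \<le> card C" by (simp add: card_inj_on_le)
  also have "card C = nat (2 * K + 1) ^ (CARD('m) - 1)"
    unfolding C_def by (simp add: card_PiE prod.remove[of UNIV j] card_Diff_singleton)
  finally show ?thesis unfolding K_def m_def .
qed

lemma span_eq_UNIV_if_card_separated_gt:
  fixes S :: "(real^'m) set"
  assumes sep: "\<And>s t. s \<in> S \<Longrightarrow> t \<in> S \<Longrightarrow> s \<noteq> t \<Longrightarrow> \<exists>i. 1 \<le> \<bar>s$i - t$i\<bar>"
    and bnd: "\<And>s i. s \<in> S \<Longrightarrow> \<bar>s$i\<bar> \<le> R"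
    and card: "nat (2 * \<lceil>real CARD('m) * R\<rceil> + 1) ^ (CARD('m) - 1) < card S"
  shows "span S = UNIV"
proof (rule ccontr)
  assume "span S \<noteq> UNIV"
  hence "dim S < DIM(real^'m)"
    using dim_eq_full dim_subset_UNIV[of S] by (metis le_neq_implies_less)
  then obtain n :: "real^'m" where n: "n \<noteq> 0" "\<And>s. s \<in> S \<Longrightarrow> n \<bullet> s = 0"
    by (rule orthogonal_to_subspace_exists) (auto simp: orthogonal_def dest: span_base)
  show False
    using card_separated_in_hyperplane_le[where S = S, OF sep bnd n] card by simp
qed

lemma integer_combination_near:
  fixes B :: "(real^'m) set" and y :: "real^'m"
  assumes fin: "finite B" and span: "span B = UNIV" and bnd: "\<And>b i. b \<in> B \<Longrightarrow> \<bar>b$i\<bar> \<le> R"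
  obtains k :: "real^'m \<Rightarrow> int"
  where "\<And>i. \<bar>y$i - (\<Sum>b\<in>B. of_int (k b) *\<^sub>R b)$i\<bar> \<le> real (card B) * R"
proof -
  obtain u where u: "y = (\<Sum>b\<in>B. u b *\<^sub>R b)"
    using span span_finite[OF fin] by auto
  have "\<bar>y$i - (\<Sum>b\<in>B. of_int \<lfloor>u b\<rfloor> *\<^sub>R b)$i\<bar> \<le> real (card B) * R" for i
  proof -
    have "y$i - (\<Sum>b\<in>B. of_int \<lfloor>u b\<rfloor> *\<^sub>R b)$i = (\<Sum>b\<in>B. (u b - of_int \<lfloor>u b\<rfloor>) * b$i)"
      unfolding u by (simp add: sum_component sum_subtractf left_diff_distrib)
    also have "\<bar>\<dots>\<bar> \<le> (\<Sum>b\<in>B. R)"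
    proof (rule order_trans[OF sum_abs sum_mono])
      fix b assume "b \<in> B"
      hence "\<bar>b$i\<bar> \<le> R" using bnd by blast
      moreover have "\<bar>u b - of_int \<lfloor>u b\<rfloor>\<bar> \<le> 1" by linarith
      ultimately show "\<bar>(u b - of_int \<lfloor>u b\<rfloor>) * b$i\<bar> \<le> R"
        using mult_mono[of "\<bar>u b - of_int \<lfloor>u b\<rfloor>\<bar>" 1 "\<bar>b$i\<bar>" R] by (simp add: abs_mult)
    qed
    finally show ?thesis by simp
  qed
  thus ?thesis by (rule that)
qed

section \<open>The lattice of a badly approximable vector\<close>

lemma intvecs_add: "p \<in> intvecs \<Longrightarrow> p' \<in> intvecs \<Longrightarrow> p + p' \<in> intvecs"
  and intvecs_diff: "p \<in> intvecs \<Longrightarrow> p' \<in> intvecs \<Longrightarrow> p - p' \<in> intvecs"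
  and intvecs_uminus: "p \<in> intvecs \<Longrightarrow> - p \<in> intvecs"
  and intvecs_scaleR_of_int: "p \<in> intvecs \<Longrightarrow> of_int k *\<^sub>R p \<in> intvecs"
  and intvecs_zero: "0 \<in> intvecs"
  by (auto simp: intvecs_def)

definition badly_approximable_upto :: "real^'n \<Rightarrow> real \<Rightarrow> real \<Rightarrow> bool" where
  "badly_approximable_upto \<alpha> Q \<delta> \<longleftrightarrow>
     (\<forall>q p. 1 \<le> q \<longrightarrow> real_of_int q \<le> Q \<longrightarrow> p \<in> intvecs \<longrightarrow> (\<exists>i. \<delta> \<le> \<bar>of_int q * \<alpha>$i - p$i\<bar>))"

lemma badly_approximable_uptoD:
  assumes "badly_approximable_upto \<alpha> Q \<delta>" "q \<noteq> 0" "\<bar>real_of_int q\<bar> \<le> Q" "p \<in> intvecs"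
  shows "\<exists>i. \<delta> \<le> \<bar>of_int q * \<alpha>$i - p$i\<bar>"
proof (cases "q > 0")
  case True
  thus ?thesis using assms unfolding badly_approximable_upto_def by auto
next
  case False
  hence "1 \<le> -q" "real_of_int (-q) \<le> Q" "-p \<in> intvecs"
    using assms intvecs_uminus by auto
  then obtain i where "\<delta> \<le> \<bar>of_int (-q) * \<alpha>$i - (-p)$i\<bar>"
    using assms(1) unfolding badly_approximable_upto_def by blast
  hence "\<delta> \<le> \<bar>of_int q * \<alpha>$i - p$i\<bar>" by (simp add: abs_minus_commute)
  thus ?thesis ..
qed

definition lattice_vec :: "real \<Rightarrow> real \<Rightarrow> real^'n \<Rightarrow> int \<Rightarrow> real^'n \<Rightarrow> real^'n option" where
  "lattice_vec Q \<delta> \<alpha> q p =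
     (\<chi> i. case i of None \<Rightarrow> of_int q / Q | Some j \<Rightarrow> (of_int q * \<alpha>$j - p$j) / \<delta>)"

definition lattice :: "real \<Rightarrow> real \<Rightarrow> real^'n \<Rightarrow> (real^'n option) set" where
  "lattice Q \<delta> \<alpha> = {lattice_vec Q \<delta> \<alpha> q p | q p. p \<in> intvecs}"

lemma lattice_vec_None [simp]: "lattice_vec Q \<delta> \<alpha> q p $ None = of_int q / Q"
  and lattice_vec_Some [simp]: "lattice_vec Q \<delta> \<alpha> q p $ Some j = (of_int q * \<alpha>$j - p$j) / \<delta>"
  by (simp_all add: lattice_vec_def)

lemma lattice_vec_add:
  "lattice_vec Q \<delta> \<alpha> q p + lattice_vec Q \<delta> \<alpha> q' p' = lattice_vec Q \<delta> \<alpha> (q + q') (p + p')"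
  unfolding vec_eq_iff lattice_vec_def
  by (auto simp: add_divide_distrib[symmetric] algebra_simps split: option.split)

lemma lattice_vec_diff:
  "lattice_vec Q \<delta> \<alpha> q p - lattice_vec Q \<delta> \<alpha> q' p' = lattice_vec Q \<delta> \<alpha> (q - q') (p - p')"
  unfolding vec_eq_iff lattice_vec_def
  by (auto simp: diff_divide_distrib add_divide_distrib algebra_simps split: option.split)

lemma lattice_vec_scaleR_of_int:
  "of_int k *\<^sub>R lattice_vec Q \<delta> \<alpha> q p = lattice_vec Q \<delta> \<alpha> (k * q) (of_int k *\<^sub>R p)"
  unfolding vec_eq_iff lattice_vec_def by (auto simp: algebra_simps split: option.split)

lemma lattice_diff_mem: "s \<in> lattice Q \<delta> \<alpha> \<Longrightarrow> t \<in> lattice Q \<delta> \<alpha> \<Longrightarrow> s - t \<in> lattice Q \<delta> \<alpha>"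
  unfolding lattice_def using lattice_vec_diff intvecs_diff by blast

lemma lattice_sum_mem:
  assumes "finite B" "B \<subseteq> lattice Q \<delta> \<alpha>"
  shows "(\<Sum>b\<in>B. of_int (k b) *\<^sub>R b) \<in> lattice Q \<delta> \<alpha>"
  using assms
proof (induction B rule: finite_induct)
  case empty
  have "lattice_vec Q \<delta> \<alpha> 0 0 = 0" by (simp add: vec_eq_iff lattice_vec_def split: option.split)
  thus ?case unfolding lattice_def using intvecs_zero by force
next
  case (insert b B)
  obtain q p where p: "p \<in> intvecs" and sum: "(\<Sum>b\<in>B. of_int (k b) *\<^sub>R b) = lattice_vec Q \<delta> \<alpha> q p"
    using insert unfolding lattice_def by auto
  obtain q' p' where p': "p' \<in> intvecs" and b: "b = lattice_vec Q \<delta> \<alpha> q' p'"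
    using insert unfolding lattice_def by auto
  have "(\<Sum>b\<in>insert b B. of_int (k b) *\<^sub>R b)
      = lattice_vec Q \<delta> \<alpha> (k b * q' + q) (of_int (k b) *\<^sub>R p' + p)"
    using insert sum b by (simp add: lattice_vec_scaleR_of_int lattice_vec_add)
  thus ?case using p p' intvecs_add intvecs_scaleR_of_int unfolding lattice_def by blast
qed

lemma lattice_nonzero_component_ge_one:
  assumes bad: "badly_approximable_upto \<alpha> Q \<delta>" and "Q > 0" "0 < \<delta>" "\<delta> \<le> 1"
    and v: "v \<in> lattice Q \<delta> \<alpha>" "v \<noteq> 0"
  shows "\<exists>i. 1 \<le> \<bar>v$i\<bar>"
proof -
  obtain q p where p: "p \<in> intvecs" and v_eq: "v = lattice_vec Q \<delta> \<alpha> q p"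
    using v unfolding lattice_def by auto
  consider "q = 0" | "q \<noteq> 0" "\<bar>real_of_int q\<bar> \<le> Q" | "Q < \<bar>real_of_int q\<bar>" by fastforce
  thus ?thesis
  proof cases
    case 1
    have "p \<noteq> 0"
    proof
      assume "p = 0"
      hence "v = 0" unfolding v_eq 1 by (simp add: vec_eq_iff lattice_vec_def split: option.split)
      thus False using v by simp
    qed
    then obtain j where "p$j \<noteq> 0" by (metis vec_eq_iff zero_index)
    moreover have "p$j \<in> \<int>" using p by (auto simp: intvecs_def)
    ultimately have "1 \<le> \<bar>p$j\<bar>" by (auto elim: Ints_cases)
    hence "1 \<le> \<bar>v $ Some j\<bar>" using 1 \<open>0 < \<delta>\<close> \<open>\<delta> \<le> 1\<close> by (simp add: v_eq le_divide_eq)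
    thus ?thesis by blast
  next
    case 2
    then obtain i where "\<delta> \<le> \<bar>of_int q * \<alpha>$i - p$i\<bar>"
      using badly_approximable_uptoD[OF bad _ _ p] by blast
    hence "1 \<le> \<bar>v $ Some i\<bar>" using \<open>0 < \<delta>\<close> by (simp add: v_eq le_divide_eq)
    thus ?thesis by blast
  next
    case 3
    hence "1 \<le> \<bar>v $ None\<bar>" using \<open>Q > 0\<close> by (simp add: v_eq le_divide_eq)
    thus ?thesis by blast
  qed
qed

lemma many_multiples_in_one_cell:
  fixes \<alpha> :: "real^'n" and N K :: nat
  assumes "K > 0"
  obtains F where "F \<subseteq> {..<N}" "N \<le> card F * K ^ CARD('n)"
    "\<And>q q' j. q \<in> F \<Longrightarrow> q' \<in> F \<Longrightarrow> \<bar>frac (real q * \<alpha>$j) - frac (real q' * \<alpha>$j)\<bar> < 1 / real K"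
proof -
  define cell where "cell q = (\<lambda>j. nat \<lfloor>frac (real q * \<alpha>$j) * real K\<rfloor>)" for q :: nat
  define C where "C = PiE (UNIV :: 'n set) (\<lambda>_. {..<K})"
  have "cell \<in> {..<N} \<rightarrow> C"
  proof
    fix q
    have "frac (real q * \<alpha>$j) * real K < real K" for j
      using frac_lt_1 \<open>K > 0\<close> by simp
    thus "cell q \<in> C" unfolding cell_def C_def by (auto simp: nat_less_iff floor_less_iff)
  qed
  moreover have "finite C" "C \<noteq> {}" unfolding C_def using \<open>K > 0\<close> by (auto intro!: finite_PiE)
  ultimately obtain y where "card {..<N} \<le> card (cell -` {y} \<inter> {..<N}) * card C"
    using pigeonhole_card[of cell "{..<N}" C] by auto
  moreover have "card C = K ^ CARD('n)" unfolding C_def by (simp add: card_PiE)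
  moreover have "\<bar>frac (real q * \<alpha>$j) - frac (real q' * \<alpha>$j)\<bar> < 1 / real K"
    if "cell q = y" "cell q' = y" for q q' j
  proof -
    have "nat \<lfloor>frac (real q * \<alpha>$j) * real K\<rfloor> = nat \<lfloor>frac (real q' * \<alpha>$j) * real K\<rfloor>"
      using that unfolding cell_def by metis
    hence "\<lfloor>frac (real q * \<alpha>$j) * real K\<rfloor> = \<lfloor>frac (real q' * \<alpha>$j) * real K\<rfloor>"
      by (simp add: frac_ge_0 nat_eq_iff2)
    hence "\<bar>frac (real q * \<alpha>$j) * real K - frac (real q' * \<alpha>$j) * real K\<bar> < 1"
      by linarith
    hence "\<bar>frac (real q * \<alpha>$j) - frac (real q' * \<alpha>$j)\<bar> * real K < 1"
      by (simp add: left_diff_distrib[symmetric] abs_mult)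
    thus ?thesis using \<open>K > 0\<close> by (simp add: less_divide_eq)
  qed
  ultimately show ?thesis by (intro that[of "cell -` {y} \<inter> {..<N}"]) auto
qed

lemma abs_lattice_vec_floor_diff_le:
  fixes \<alpha> :: "real^'n" and q q' :: nat
  assumes "0 < Q" "0 < \<delta>" "\<bar>real q - real q'\<bar> \<le> R * Q"
    and "\<And>j. \<bar>frac (real q * \<alpha>$j) - frac (real q' * \<alpha>$j)\<bar> \<le> R * \<delta>"
  shows "\<bar>lattice_vec Q \<delta> \<alpha> (int q - int q')
            ((\<chi> j. of_int \<lfloor>real q * \<alpha>$j\<rfloor>) - (\<chi> j. of_int \<lfloor>real q' * \<alpha>$j\<rfloor>)) $ i\<bar> \<le> R"
proof (cases i)
  case None
  thus ?thesis using assms(1,3) by (simp add: divide_le_eq)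
next
  case (Some j)
  have "lattice_vec Q \<delta> \<alpha> (int q - int q')
          ((\<chi> j. of_int \<lfloor>real q * \<alpha>$j\<rfloor>) - (\<chi> j. of_int \<lfloor>real q' * \<alpha>$j\<rfloor>)) $ i
      = (frac (real q * \<alpha>$j) - frac (real q' * \<alpha>$j)) / \<delta>"
    by (simp add: Some frac_def algebra_simps diff_divide_distrib)
  thus ?thesis using assms(2) assms(4)[of j] by (simp add: pos_divide_le_eq)
qed

lemma many_short_lattice_vectors:
  fixes \<alpha> :: "real^'n" and U :: nat
  assumes Q: "Q > 0" and \<delta>: "\<delta> > 0" and R: "R > 0" and R\<delta>: "R * \<delta> \<le> 1"
    and U: "real U * (2 / (R * \<delta>)) ^ CARD('n) \<le> R * Q"
  obtains S where "S \<subseteq> lattice Q \<delta> \<alpha>" "finite S" "U < card S" "\<And>s i. s \<in> S \<Longrightarrow> \<bar>s$i\<bar> \<le> R"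
proof -
  define N where "N = nat \<lfloor>R * Q\<rfloor> + 1"
  define K where "K = nat \<lceil>1 / (R * \<delta>)\<rceil>"
  have inv_ge_1: "1 \<le> 1 / (R * \<delta>)" using R \<delta> R\<delta> by simp
  have K_ge: "1 / (R * \<delta>) \<le> real K" unfolding K_def by linarith
  have K_le: "real K \<le> 2 / (R * \<delta>)" unfolding K_def using inv_ge_1 by linarith
  have K_pos: "K > 0" using K_ge inv_ge_1 by linarith
  obtain F where F: "F \<subseteq> {..<N}" "N \<le> card F * K ^ CARD('n)"
    and close: "\<And>q q' j. q \<in> F \<Longrightarrow> q' \<in> F \<Longrightarrow>
                  \<bar>frac (real q * \<alpha>$j) - frac (real q' * \<alpha>$j)\<bar> < 1 / real K"
    using many_multiples_in_one_cell[OF K_pos] by blast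
  have "real (U * K ^ CARD('n)) = real U * real K ^ CARD('n)" by simp
  also have "\<dots> \<le> real U * (2 / (R * \<delta>)) ^ CARD('n)"
    using K_le by (intro mult_left_mono power_mono) auto
  also have "\<dots> \<le> R * Q" by (rule U)
  also have "\<dots> < real N" unfolding N_def using R Q by linarith
  finally have "U * K ^ CARD('n) < card F * K ^ CARD('n)" using F(2) by linarith
  hence card_F: "U < card F" by simp
  then obtain q0 where q0: "q0 \<in> F" by fastforce
  define fl where "fl q = (\<chi> j. of_int \<lfloor>real q * \<alpha>$j\<rfloor> :: real^'n)" for q :: nat
  define v where "v q = lattice_vec Q \<delta> \<alpha> (int q - int q0) (fl q - fl q0)" for q
  have "inj_on v F"
  proof (rule inj_onI)
    fix a b assume "v a = v b"
    hence "v a $ None = v b $ None" by simp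
    thus "a = b" using Q by (simp add: v_def)
  qed
  have "1 / real K \<le> R * \<delta>" using K_ge K_pos R \<delta> by (simp add: field_simps)
  have "\<bar>v q $ i\<bar> \<le> R" if "q \<in> F" for q i
  proof -
    have "q < N" "q0 < N" using F(1) q0 that by auto
    moreover have "int (nat \<lfloor>R * Q\<rfloor>) = \<lfloor>R * Q\<rfloor>" using R Q by simp
    ultimately have "\<bar>int q - int q0\<bar> \<le> \<lfloor>R * Q\<rfloor>" unfolding N_def by linarith
    hence "\<bar>real q - real q0\<bar> \<le> R * Q" by linarith
    moreover have "\<bar>frac (real q * \<alpha>$j) - frac (real q0 * \<alpha>$j)\<bar> \<le> R * \<delta>" for j
      using close[OF that q0, of j] \<open>1 / real K \<le> R * \<delta>\<close> by linarith
    ultimately show ?thesis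
      unfolding v_def fl_def by (rule abs_lattice_vec_floor_diff_le[OF Q \<delta>])
  qed
  moreover have "v ` F \<subseteq> lattice Q \<delta> \<alpha>"
  proof -
    have "fl q \<in> intvecs" for q unfolding fl_def intvecs_def by auto
    thus ?thesis unfolding v_def lattice_def using intvecs_diff by blast
  qed
  moreover have "finite (v ` F)" using finite_subset[OF F(1)] by simp
  moreover have "U < card (v ` F)" using card_F \<open>inj_on v F\<close> by (simp add: card_image)
  ultimately show ?thesis by (intro that[of "v ` F"]) auto
qed

lemma short_lattice_vectors_span:
  fixes \<alpha> :: "real^'n"
  defines "M \<equiv> real (CARD('n) + 1)"
  assumes bad: "badly_approximable_upto \<alpha> Q \<delta>" and Q: "Q > 0" and \<delta>: "0 < \<delta>" "\<delta> \<le> 1"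
    and R: "R \<ge> 1" "R * \<delta> \<le> 1" and vol: "(10 * M) ^ CARD('n) \<le> R * Q * \<delta> ^ CARD('n)"
  obtains S where "S \<subseteq> lattice Q \<delta> \<alpha>" "finite S" "span S = UNIV" "\<And>s i. s \<in> S \<Longrightarrow> \<bar>s$i\<bar> \<le> R"
proof -
  define U where "U = nat (2 * \<lceil>M * R\<rceil> + 1) ^ CARD('n)"
  have "1 \<le> M" unfolding M_def by simp
  hence MR: "1 \<le> M * R" using mult_mono[of 1 M 1 R] R(1) by simp
  have "real U \<le> (5 * M * R) ^ CARD('n)"
  proof -
    have "real (nat (2 * \<lceil>M * R\<rceil> + 1)) \<le> 5 * M * R" using MR by linarith
    thus ?thesis unfolding U_def by (simp add: power_mono)
  qed
  hence "real U * (2 / (R * \<delta>)) ^ CARD('n) \<le> (5 * M * R) ^ CARD('n) * (2 / (R * \<delta>)) ^ CARD('n)"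
    by (rule mult_right_mono) (use R \<delta> in auto)
  also have "\<dots> = (10 * M) ^ CARD('n) / \<delta> ^ CARD('n)"
  proof -
    have "5 * M * R * (2 / (R * \<delta>)) = 10 * M / \<delta>" using R \<delta> by (simp add: field_simps)
    thus ?thesis by (metis power_mult_distrib power_divide)
  qed
  also have "\<dots> \<le> R * Q" using vol \<delta> by (simp add: divide_le_eq)
  finally obtain S where S: "S \<subseteq> lattice Q \<delta> \<alpha>" "finite S" "U < card S"
    and short: "\<And>s i. s \<in> S \<Longrightarrow> \<bar>s$i\<bar> \<le> R"
    using many_short_lattice_vectors[OF Q \<delta>(1) _ R(2)] R(1) by auto
  have "\<exists>i. 1 \<le> \<bar>s$i - t$i\<bar>" if "s \<in> S" "t \<in> S" "s \<noteq> t" for s t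
    using lattice_nonzero_component_ge_one[OF bad Q \<delta> lattice_diff_mem] that S(1) by fastforce
  moreover have "CARD('n option) = CARD('n) + 1" by (simp add: card_option)
  ultimately have "span S = UNIV"
    using span_eq_UNIV_if_card_separated_gt[where S = S, OF _ short] S(3)
    unfolding U_def M_def by simp
  with S short show ?thesis by (intro that) auto
qed

lemma lattice_covering:
  fixes \<alpha> z :: "real^'n"
  defines "M \<equiv> real (CARD('n) + 1)"
  assumes bad: "badly_approximable_upto \<alpha> Q \<delta>" and Q: "Q > 0" and \<delta>: "0 < \<delta>" "\<delta> \<le> 1"
    and R: "R \<ge> 1" "R * \<delta> \<le> 1" and vol: "(10 * M) ^ CARD('n) \<le> R * Q * \<delta> ^ CARD('n)"
  obtains q p where "p \<in> intvecs" "\<bar>of_int q - T\<bar> \<le> M * R * Q"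
    "\<And>j. \<bar>of_int q * \<alpha>$j - p$j - z$j\<bar> \<le> M * R * \<delta>"
proof -
  obtain S where S: "S \<subseteq> lattice Q \<delta> \<alpha>" "finite S" "span S = UNIV"
    and short: "\<And>s i. s \<in> S \<Longrightarrow> \<bar>s$i\<bar> \<le> R"
    using short_lattice_vectors_span[OF bad Q \<delta> R vol[unfolded M_def]] by blast
  obtain B where B: "B \<subseteq> S" "independent B" "S \<subseteq> span B" "card B = dim S"
    by (rule basis_exists)
  have span_B: "span B = UNIV" using B(3) S(3) span_minimal by blast
  have "dim S = dim (span S)" by (rule dim_span[symmetric])
  also have "\<dots> = CARD('n) + 1" using S(3) by (simp add: card_option)
  finally have card_B: "real (card B) = M" using B(4) unfolding M_def by simp
  define y :: "real^'n option" where
    "y = (\<chi> i. case i of None \<Rightarrow> T / Q | Some j \<Rightarrow> z$j / \<delta>)"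
  obtain k where k: "\<And>i. \<bar>y$i - (\<Sum>b\<in>B. of_int (k b) *\<^sub>R b)$i\<bar> \<le> real (card B) * R"
    using integer_combination_near[OF finite_subset[OF B(1) S(2)] span_B] B(1) short by blast
  have "(\<Sum>b\<in>B. of_int (k b) *\<^sub>R b) \<in> lattice Q \<delta> \<alpha>"
    by (rule lattice_sum_mem[OF finite_subset[OF B(1) S(2)] order_trans[OF B(1) S(1)]])
  then obtain q p where p: "p \<in> intvecs" and sum: "(\<Sum>b\<in>B. of_int (k b) *\<^sub>R b) = lattice_vec Q \<delta> \<alpha> q p"
    unfolding lattice_def by blast
  show ?thesis
  proof (rule that[OF p])
    have "\<bar>T / Q - of_int q / Q\<bar> \<le> M * R" using k[of None] by (simp add: sum card_B y_def)
    thus "\<bar>of_int q - T\<bar> \<le> M * R * Q"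
      using Q by (simp add: diff_divide_distrib[symmetric] abs_minus_commute divide_le_eq)
  next
    fix j
    have "\<bar>z$j / \<delta> - (of_int q * \<alpha>$j - p$j) / \<delta>\<bar> \<le> M * R"
      using k[of "Some j"] by (simp add: sum card_B y_def)
    thus "\<bar>of_int q * \<alpha>$j - p$j - z$j\<bar> \<le> M * R * \<delta>"
      using \<delta> by (simp add: diff_divide_distrib[symmetric] abs_minus_commute divide_le_eq algebra_simps)
  qed
qed

section \<open>Failure of \<open>S(\<omega>)\<close>\<close>

lemma supnorm_attained: "\<exists>i. supnorm x = \<bar>x$i\<bar>"
proof -
  have "Max (range (\<lambda>i. \<bar>x$i\<bar>)) \<in> range (\<lambda>i. \<bar>x$i\<bar>)" by (rule Max_in) auto
  thus ?thesis unfolding supnorm_def by (metis imageE)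
qed

lemma supnorm_nonneg: "0 \<le> supnorm x"
  using supnorm_attained[of x] by fastforce

lemma distZ_le_supnorm: "p \<in> intvecs \<Longrightarrow> distZ x \<le> supnorm (x - p)"
  unfolding distZ_def by (rule cInf_lower) (auto intro!: bdd_belowI[of _ 0] simp: supnorm_nonneg)

lemma distZ_nonneg: "0 \<le> distZ x"
  unfolding distZ_def by (rule cInf_greatest) (auto simp: supnorm_nonneg intro: intvecs_zero)

lemma Min_distZ_multiples:
  fixes \<alpha> :: "real^'n" and Q :: nat
  defines "m \<equiv> Min {distZ (real_of_int q *\<^sub>R \<alpha>) | q::int. 0 < q \<and> q \<le> int Q}"
  assumes "1 \<le> q" "q \<le> int Q"
  shows "m \<le> distZ (real_of_int q *\<^sub>R \<alpha>)" and "0 \<le> m"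
proof -
  have eq: "{distZ (real_of_int q *\<^sub>R \<alpha>) | q::int. 0 < q \<and> q \<le> int Q}
      = (\<lambda>q. distZ (real_of_int q *\<^sub>R \<alpha>)) ` {1..int Q}"
    by auto
  show "m \<le> distZ (real_of_int q *\<^sub>R \<alpha>)"
    unfolding m_def eq using assms by (intro Min_le) auto
  show "0 \<le> m"
    unfolding m_def eq using assms by (subst Min_ge_iff) (auto simp: distZ_nonneg)
qed

lemma badly_approximable_upto_if_le_Min_distZ:
  fixes \<alpha> :: "real^'n" and Q :: nat
  assumes "\<delta> \<le> Min {distZ (real_of_int q *\<^sub>R \<alpha>) | q::int. 0 < q \<and> q \<le> int Q}"
  shows "badly_approximable_upto \<alpha> (real Q) \<delta>"
  unfolding badly_approximable_upto_def
proof (intro allI impI)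
  fix q :: int and p :: "real^'n"
  assume "1 \<le> q" "real_of_int q \<le> real Q" "p \<in> intvecs"
  moreover have "q \<le> int Q" using \<open>real_of_int q \<le> real Q\<close> by linarith
  ultimately have "\<delta> \<le> supnorm (real_of_int q *\<^sub>R \<alpha> - p)"
    using assms Min_distZ_multiples(1)[of q Q \<alpha>] distZ_le_supnorm[of p] by (meson order_trans)
  moreover obtain i where "supnorm (real_of_int q *\<^sub>R \<alpha> - p) = \<bar>(real_of_int q *\<^sub>R \<alpha> - p)$i\<bar>"
    using supnorm_attained by blast
  ultimately show "\<exists>i. \<delta> \<le> \<bar>of_int q * \<alpha>$i - p$i\<bar>" by auto
qed

lemma badly_approximable_upto_powr_weaken:
  assumes "badly_approximable_upto \<alpha> Q (c * Q powr (-\<omega>))" "0 \<le> c'" "c' \<le> c" "\<omega> \<le> \<omega>'"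
  shows "badly_approximable_upto \<alpha> Q (c' * Q powr (-\<omega>'))"
proof (cases "Q \<ge> 1")
  case True
  hence le: "c' * Q powr (-\<omega>') \<le> c * Q powr (-\<omega>)"
    using assms(2-4) by (intro mult_mono powr_mono) auto
  show ?thesis using assms(1) unfolding badly_approximable_upto_def by (blast intro: order_trans[OF le])
next
  case False
  thus ?thesis unfolding badly_approximable_upto_def by auto
qed

lemma frequently_badly_approximable_if_not_tendsto:
  fixes \<alpha> :: "real^'n"
  assumes "\<not> (\<lambda>Q::nat. real Q powr \<omega> *
             Min {distZ (real_of_int q *\<^sub>R \<alpha>) | q::int. 0 < q \<and> q \<le> int Q}) \<longlonglongrightarrow> 0"
    and "\<omega> \<le> \<omega>'"
  obtains c where "0 < c" "c \<le> 1"
    "\<exists>\<^sub>F Q in sequentially. badly_approximable_upto \<alpha> (real Q) (c * real Q powr (-\<omega>'))"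
proof -
  define m where "m Q = Min {distZ (real_of_int q *\<^sub>R \<alpha>) | q::int. 0 < q \<and> q \<le> int Q}" for Q
  obtain c where c: "c > 0" and "\<not> (\<forall>\<^sub>F Q in sequentially. dist (real Q powr \<omega> * m Q) 0 < c)"
    using assms(1) unfolding tendsto_iff m_def by blast
  hence "\<exists>\<^sub>F Q in sequentially. c \<le> \<bar>real Q powr \<omega> * m Q\<bar>"
    by (simp add: not_eventually not_less)
  hence "\<exists>\<^sub>F Q in sequentially. badly_approximable_upto \<alpha> (real Q) (min c 1 * real Q powr (-\<omega>'))"
  proof (rule frequently_elim1)
    fix Q :: nat assume big: "c \<le> \<bar>real Q powr \<omega> * m Q\<bar>"
    hence "Q \<ge> 1" using c by (cases Q) auto
    hence "0 \<le> m Q" unfolding m_def by (intro Min_distZ_multiples(2)[of 1]) auto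
    hence "c \<le> m Q * real Q powr \<omega>" using big by (simp add: abs_mult mult.commute)
    hence "c * real Q powr (-\<omega>) \<le> m Q"
      using \<open>Q \<ge> 1\<close> by (simp add: powr_minus_divide pos_divide_le_eq)
    hence "badly_approximable_upto \<alpha> (real Q) (c * real Q powr (-\<omega>))"
      unfolding m_def by (rule badly_approximable_upto_if_le_Min_distZ)
    thus "badly_approximable_upto \<alpha> (real Q) (min c 1 * real Q powr (-\<omega>'))"
      by (rule badly_approximable_upto_powr_weaken) (use c assms(2) in auto)
  qed
  thus ?thesis by (rule that[rotated 2]) (use c in auto)
qed

section \<open>Density of the scaled approximation errors\<close>

lemma abs_powr_sub_one_le:
  fixes r \<eta> :: real
  assumes "r > 0" "0 \<le> \<eta>" "\<eta> \<le> 1"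
  shows "\<bar>r powr \<eta> - 1\<bar> \<le> \<bar>r - 1\<bar>"
proof (cases "r \<ge> 1")
  case True
  have "1 \<le> r powr \<eta>" using powr_mono[of 0 \<eta> r] True assms by simp
  moreover have "r powr \<eta> \<le> r powr 1" using True assms by (intro powr_mono) auto
  ultimately show ?thesis using assms by simp
next
  case False
  have "r powr \<eta> \<le> 1" using False assms by (simp add: powr_le1)
  moreover have "r powr 1 \<le> r powr \<eta>" using False assms by (intro powr_mono') auto
  ultimately show ?thesis using assms False by simp
qed

lemma approximation_of_scaled_target:
  fixes \<alpha> x p :: "real^'n"
  assumes \<eta>: "0 \<le> \<eta>" "\<eta> \<le> 1" and W: "W > 0" and K: "K \<ge> 2"
    and q: "\<bar>of_int q - K * W\<bar> \<le> W"
    and p: "\<And>j. \<bar>of_int q * \<alpha>$j - p$j - ((K * W) powr (-\<eta>) *\<^sub>R x)$j\<bar> \<le> \<epsilon>"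
  shows "0 < q"
    and "norm (\<bar>real_of_int q\<bar> powr \<eta> *\<^sub>R (real_of_int q *\<^sub>R \<alpha> - p) - x)
           \<le> ((K + 1) * W) powr \<eta> * (real CARD('n) * \<epsilon>) + norm x / K"
proof -
  define T where "T = K * W"
  have T: "T > 0" unfolding T_def using K W by simp
  have "2 * W \<le> K * W" using K W by (intro mult_right_mono) auto
  hence q_ge: "W \<le> of_int q" using q by linarith
  thus "0 < q" using W by linarith
  have q_le: "of_int q \<le> (K + 1) * W" using q by (simp add: algebra_simps)
  define qe where "qe = real_of_int q powr \<eta>"
  define v where "v = real_of_int q *\<^sub>R \<alpha> - p - T powr (-\<eta>) *\<^sub>R x"
  have "norm v \<le> (\<Sum>j\<in>UNIV. \<bar>v$j\<bar>)" by (rule norm_le_l1_cart)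
  also have "\<dots> \<le> real CARD('n) * \<epsilon>"
    using sum_bounded_above[of UNIV "\<lambda>j. \<bar>v$j\<bar>" \<epsilon>] p by (simp add: v_def T_def)
  finally have v: "norm v \<le> real CARD('n) * \<epsilon>" .
  have first: "qe * norm v \<le> ((K + 1) * W) powr \<eta> * (real CARD('n) * \<epsilon>)"
    unfolding qe_def using v q_le q_ge W \<eta> by (intro mult_mono powr_mono2) auto
  have "\<bar>qe * T powr (-\<eta>) - 1\<bar> \<le> 1 / K"
  proof -
    have "qe * T powr (-\<eta>) = (real_of_int q / T) powr \<eta>"
      unfolding qe_def using q_ge W T by (simp add: powr_divide powr_minus_divide)
    hence "\<bar>qe * T powr (-\<eta>) - 1\<bar> \<le> \<bar>real_of_int q / T - 1\<bar>"
      using abs_powr_sub_one_le[of "real_of_int q / T" \<eta>] q_ge W T \<eta> by simp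
    also have "\<dots> = \<bar>real_of_int q - T\<bar> / T" using T by (simp add: field_simps)
    also have "\<dots> \<le> W / T" using q T unfolding T_def by (intro divide_right_mono) auto
    also have "\<dots> = 1 / K" unfolding T_def using W by simp
    finally show ?thesis .
  qed
  hence second: "\<bar>qe * T powr (-\<eta>) - 1\<bar> * norm x \<le> norm x / K"
    using mult_right_mono[of _ "1 / K" "norm x"] by simp
  have "\<bar>real_of_int q\<bar> powr \<eta> *\<^sub>R (real_of_int q *\<^sub>R \<alpha> - p) - x
      = qe *\<^sub>R v + (qe * T powr (-\<eta>) - 1) *\<^sub>R x"
    unfolding qe_def v_def using q_ge W by (simp add: algebra_simps)
  hence "norm (\<bar>real_of_int q\<bar> powr \<eta> *\<^sub>R (real_of_int q *\<^sub>R \<alpha> - p) - x)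
      \<le> qe * norm v + \<bar>qe * T powr (-\<eta>) - 1\<bar> * norm x"
    using norm_triangle_ineq[of "qe *\<^sub>R v" "(qe * T powr (-\<eta>) - 1) *\<^sub>R x"]
    unfolding qe_def by simp
  with first second show "norm (\<bar>real_of_int q\<bar> powr \<eta> *\<^sub>R (real_of_int q *\<^sub>R \<alpha> - p) - x)
      \<le> ((K + 1) * W) powr \<eta> * (real CARD('n) * \<epsilon>) + norm x / K"
    by linarith
qed

lemma eventually_mult_powr_less:
  assumes "\<kappa> < 0" "b > 0"
  shows "\<forall>\<^sub>F Q in sequentially. A * real Q powr \<kappa> < b"
proof -
  have "(\<lambda>Q. A * real Q powr \<kappa>) \<longlonglongrightarrow> A * 0"
    using assms by (intro tendsto_mult tendsto_const tendsto_neg_powr filterlim_real_sequentially)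
  thus ?thesis using assms(2) by (simp add: order_tendstoD(2))
qed

text \<open>With \<open>\<delta> = c t^(-\<omega>)\<close> and \<open>R = A t^(\<omega>d - 1)\<close> the volume condition
  \<open>(10M)^d \<le> R t \<delta>^d\<close> of \<open>lattice_covering\<close> holds with equality.\<close>

lemma covering_at_scale:
  fixes \<alpha> z :: "real^'n" and c t :: real
  defines "d \<equiv> real CARD('n)" and "M \<equiv> real (CARD('n) + 1)"
  defines "A \<equiv> (10 * M / c) ^ CARD('n)"
  assumes c: "0 < c" "c \<le> 1" and \<omega>: "1 \<le> \<omega> * d"
    and t: "1 \<le> t" and bad: "badly_approximable_upto \<alpha> t (c * t powr (-\<omega>))"
    and small: "A * c * t powr (\<omega> * (d - 1) - 1) \<le> 1"
  obtains q p where "p \<in> intvecs" "\<bar>of_int q - T\<bar> \<le> M * A * t powr (\<omega> * d)"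
    "\<And>j. \<bar>of_int q * \<alpha>$j - p$j - z$j\<bar> \<le> M * A * c * t powr (\<omega> * (d - 1) - 1)"
proof -
  define \<delta> where "\<delta> = c * t powr (-\<omega>)"
  define R where "R = A * t powr (\<omega> * d - 1)"
  have A: "1 \<le> A" unfolding A_def M_def using c by (simp add: one_le_power)
  have "0 < \<omega>"
  proof (rule ccontr)
    assume "\<not> 0 < \<omega>"
    hence "\<omega> * d \<le> 0" unfolding d_def by (simp add: mult_nonpos_nonneg)
    thus False using \<omega> by simp
  qed
  have R\<delta>: "R * \<delta> = A * c * t powr (\<omega> * (d - 1) - 1)"
    using t unfolding R_def \<delta>_def by (simp add: powr_add[symmetric] algebra_simps)
  have Rt: "R * t = A * t powr (\<omega> * d)"
    using t unfolding R_def by (simp add: powr_mult_base algebra_simps)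
  have "R * t * \<delta> ^ CARD('n) = (10 * M) ^ CARD('n)"
  proof -
    have "\<delta> ^ CARD('n) = c ^ CARD('n) * t powr (- \<omega> * d)"
      using t unfolding \<delta>_def d_def by (simp add: power_mult_distrib powr_power mult.commute)
    moreover have "t powr (\<omega> * d - 1) * t * t powr (- \<omega> * d) = 1"
      using t by (simp add: powr_add[symmetric] powr_diff)
    ultimately show ?thesis using c unfolding R_def A_def by (simp add: power_divide field_simps)
  qed
  hence vol: "(10 * M) ^ CARD('n) \<le> R * t * \<delta> ^ CARD('n)" by simp
  have "\<delta> \<le> 1" unfolding \<delta>_def using t c \<open>0 < \<omega>\<close>
    by (intro mult_le_one) (auto simp: powr_minus_divide ge_one_powr_ge_zero)
  moreover have "1 \<le> R"
  proof -
    have "1 \<le> t powr (\<omega> * d - 1)" using t \<omega> by (simp add: ge_one_powr_ge_zero)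
    thus ?thesis unfolding R_def using mult_mono[of 1 A 1 "t powr (\<omega> * d - 1)"] A by simp
  qed
  moreover have "0 < \<delta>" "0 < t" unfolding \<delta>_def using t c by auto
  moreover have "R * \<delta> \<le> 1" using small R\<delta> by simp
  ultimately obtain q p where "p \<in> intvecs" "\<bar>of_int q - T\<bar> \<le> M * R * t"
    "\<And>j. \<bar>of_int q * \<alpha>$j - p$j - z$j\<bar> \<le> M * R * \<delta>"
    using lattice_covering[OF bad[folded \<delta>_def], folded M_def] vol by blast
  thus ?thesis using that unfolding mult.assoc Rt R\<delta> by blast
qed

lemma approximation_at_scale:
  fixes \<alpha> x :: "real^'n" and c t :: real
  defines "d \<equiv> real CARD('n)" and "M \<equiv> real (CARD('n) + 1)"
  defines "A \<equiv> (10 * M / c) ^ CARD('n)"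
  assumes \<eta>: "0 < \<eta>" "\<eta> \<le> 1" and c: "0 < c" "c \<le> 1" and \<omega>: "1 \<le> \<omega> * d"
    and t: "1 \<le> t" and bad: "badly_approximable_upto \<alpha> t (c * t powr (-\<omega>))"
    and small: "A * c * t powr (\<omega> * (d - 1) - 1) \<le> 1" and K: "2 \<le> K"
  obtains q p where "q \<noteq> 0" "p \<in> intvecs"
    "dist (\<bar>real_of_int q\<bar> powr \<eta> *\<^sub>R (real_of_int q *\<^sub>R \<alpha> - p)) x
       \<le> ((K + 1) * M * A) powr \<eta> * (d * M * A * c) * t powr (\<omega> * (d * \<eta> + d - 1) - 1) + norm x / K"
proof -
  define W where "W = M * A * t powr (\<omega> * d)"
  define \<epsilon> where "\<epsilon> = M * A * c * t powr (\<omega> * (d - 1) - 1)"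
  have "1 \<le> A" unfolding A_def M_def using c by (simp add: one_le_power)
  hence W: "0 < W" unfolding W_def M_def using t by simp
  obtain q p where p: "p \<in> intvecs" and q: "\<bar>of_int q - K * W\<bar> \<le> W"
    and qp: "\<And>j. \<bar>of_int q * \<alpha>$j - p$j - ((K * W) powr (-\<eta>) *\<^sub>R x)$j\<bar> \<le> \<epsilon>"
    using covering_at_scale[OF c \<omega>[unfolded d_def] t bad small[unfolded A_def M_def d_def]]
    unfolding W_def \<epsilon>_def A_def M_def d_def by blast
  from approximation_of_scaled_target[OF less_imp_le[OF \<eta>(1)] \<eta>(2) W K q qp]
  have "0 < q" and close: "dist (\<bar>real_of_int q\<bar> powr \<eta> *\<^sub>R (real_of_int q *\<^sub>R \<alpha> - p)) x
      \<le> ((K + 1) * W) powr \<eta> * (d * \<epsilon>) + norm x / K"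
    unfolding d_def dist_norm by auto
  have "((K + 1) * W) powr \<eta> = ((K + 1) * M * A) powr \<eta> * t powr (\<omega> * d * \<eta>)"
    unfolding W_def M_def using \<open>1 \<le> A\<close> K by (simp add: powr_mult powr_powr mult.assoc)
  hence "((K + 1) * W) powr \<eta> * (d * \<epsilon>)
      = ((K + 1) * M * A) powr \<eta> * (d * M * A * c) * (t powr (\<omega> * d * \<eta>) * t powr (\<omega> * (d - 1) - 1))"
    unfolding \<epsilon>_def by (simp only: mult_ac)
  also have "t powr (\<omega> * d * \<eta>) * t powr (\<omega> * (d - 1) - 1) = t powr (\<omega> * (d * \<eta> + d - 1) - 1)"
    by (simp add: powr_add[symmetric] algebra_simps)
  finally have err: "((K + 1) * W) powr \<eta> * (d * \<epsilon>)
      = ((K + 1) * M * A) powr \<eta> * (d * M * A * c) * t powr (\<omega> * (d * \<eta> + d - 1) - 1)" .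
  show ?thesis
  proof (rule that[of q p])
    show "q \<noteq> 0" using \<open>0 < q\<close> by simp
    show "p \<in> intvecs" by (rule p)
    show "dist (\<bar>real_of_int q\<bar> powr \<eta> *\<^sub>R (real_of_int q *\<^sub>R \<alpha> - p)) x
       \<le> ((K + 1) * M * A) powr \<eta> * (d * M * A * c) * t powr (\<omega> * (d * \<eta> + d - 1) - 1) + norm x / K"
      using close unfolding err .
  qed
qed

lemma closure_eq_UNIV_if_frequently_badly_approximable:
  fixes \<alpha> :: "real^'n"
  defines "d \<equiv> real CARD('n)"
  assumes \<eta>: "0 < \<eta>" "\<eta> \<le> 1" and c: "0 < c" "c \<le> 1"
    and \<omega>: "1 \<le> \<omega> * d" "\<omega> * (d * \<eta> + d - 1) < 1"
    and freq: "\<exists>\<^sub>F Q in sequentially. badly_approximable_upto \<alpha> (real Q) (c * real Q powr (-\<omega>))"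
  shows "closure {\<bar>real_of_int q\<bar> powr \<eta> *\<^sub>R (real_of_int q *\<^sub>R \<alpha> - p) | q p. q \<noteq> 0 \<and> p \<in> intvecs}
           = UNIV" (is "closure ?S = _")
proof -
  define M where "M = real (CARD('n) + 1)"
  define A where "A = (10 * M / c) ^ CARD('n)"
  have "x \<in> closure ?S" for x
    unfolding closure_approachable
  proof (intro allI impI)
    fix e :: real assume "0 < e"
    define K where "K = 2 + 2 * norm x / e"
    have K: "2 \<le> K" unfolding K_def using \<open>0 < e\<close> by simp
    have "norm x \<le> e / 2 * K" unfolding K_def using \<open>0 < e\<close> by (simp add: field_simps)
    hence K_x: "norm x / K \<le> e / 2" using K by (simp add: divide_le_eq)
    define B where "B = ((K + 1) * M * A) powr \<eta> * (d * M * A * c)"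
    have "\<omega> * (d - 1) < \<omega> * (d * \<eta> + d - 1)"
      using \<omega>(1) \<eta>(1) by (simp add: algebra_simps)
    hence "\<forall>\<^sub>F Q in sequentially. 1 \<le> Q \<and> A * c * real Q powr (\<omega> * (d - 1) - 1) < 1
             \<and> B * real Q powr (\<omega> * (d * \<eta> + d - 1) - 1) < e / 2"
      using \<omega>(2) \<open>0 < e\<close>
      by (intro eventually_conj eventually_ge_at_top eventually_mult_powr_less) auto
    then obtain Q :: nat where bad: "badly_approximable_upto \<alpha> (real Q) (c * real Q powr (-\<omega>))"
      and "1 \<le> Q" and "A * c * real Q powr (\<omega> * (d - 1) - 1) < 1"
      and small: "B * real Q powr (\<omega> * (d * \<eta> + d - 1) - 1) < e / 2"
      using frequently_ex[OF frequently_eventually_frequently[OF freq]] by blast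
    have "1 \<le> real Q" "A * c * real Q powr (\<omega> * (d - 1) - 1) \<le> 1"
      using \<open>1 \<le> Q\<close> \<open>A * c * real Q powr (\<omega> * (d - 1) - 1) < 1\<close> by simp_all
    then obtain q p where q: "q \<noteq> 0" and p: "p \<in> intvecs"
      and close: "dist (\<bar>real_of_int q\<bar> powr \<eta> *\<^sub>R (real_of_int q *\<^sub>R \<alpha> - p)) x
                    \<le> B * real Q powr (\<omega> * (d * \<eta> + d - 1) - 1) + norm x / K"
      by (rule approximation_at_scale[OF \<eta> c \<omega>(1)[unfolded d_def] _ bad _ K,
            folded M_def, folded A_def d_def, folded B_def])
    show "\<exists>y\<in>?S. dist y x < e"
    proof (rule bexI)
      show "dist (\<bar>real_of_int q\<bar> powr \<eta> *\<^sub>R (real_of_int q *\<^sub>R \<alpha> - p)) x < e"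
        using close small K_x by linarith
      show "\<bar>real_of_int q\<bar> powr \<eta> *\<^sub>R (real_of_int q *\<^sub>R \<alpha> - p) \<in> ?S"
        using q p by (intro CollectI exI[of _ q] exI[of _ p]) simp
    qed
  qed
  thus ?thesis by auto
qed

lemma in_Dset_if_closure_eq_UNIV:
  assumes "closure {\<bar>real_of_int q\<bar> powr \<eta> *\<^sub>R (real_of_int q *\<^sub>R \<alpha> - p) | q p. q \<noteq> 0 \<and> p \<in> intvecs}
             = (UNIV :: (real^'n) set)" (is "closure ?S = _")
  shows "\<alpha> \<in> Dset \<eta>"
proof -
  have "x islimpt ?S" for x using assms islimpt_UNIV[of x] limpt_of_closure[of x ?S] by simp
  thus ?thesis unfolding Dset_def accA_def by blast
qed

lemma max_inverse_exponent_bounds: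
  fixes d \<eta> \<omega> :: real
  assumes "1 \<le> d" "0 < \<eta>" "\<eta> < 1 / d" "\<omega> < 1 / (d * \<eta> + d - 1)"
  shows "1 \<le> max \<omega> (1 / d) * d" and "max \<omega> (1 / d) * (d * \<eta> + d - 1) < 1"
proof -
  show "1 \<le> max \<omega> (1 / d) * d" using assms(1) by (simp add: max_def field_simps)
  have "0 < d * \<eta>" using assms(1,2) by simp
  hence "0 < d * \<eta> + d - 1" using assms(1) by linarith
  hence "\<omega> * (d * \<eta> + d - 1) < 1" using assms(4) by (simp add: less_divide_eq)
  moreover have "1 / d * (d * \<eta> + d - 1) < 1" using assms(1,3) by (simp add: field_simps)
  ultimately show "max \<omega> (1 / d) * (d * \<eta> + d - 1) < 1" by (simp add: max_def)
qed

theorem lemma6: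
  fixes \<eta> \<omega> :: real
  assumes "0 < \<eta>" and "\<eta> < 1 / real CARD('n::finite)"
    and "0 < \<omega>" and "\<omega> < 1 / (real CARD('n) * \<eta> + real CARD('n) - 1)"
  shows "(UNIV - (Dset \<eta> :: (real^'n) set)) - (UNIV - Kset) \<subseteq> Sset \<omega>"
proof
  fix \<alpha> :: "real^'n" assume "\<alpha> \<in> (UNIV - Dset \<eta>) - (UNIV - Kset)"
  hence "\<alpha> \<notin> Dset \<eta>" "\<alpha> \<in> Kset" by auto
  show "\<alpha> \<in> Sset \<omega>"
  proof (rule ccontr)
    assume "\<alpha> \<notin> Sset \<omega>"
    define d where "d = real CARD('n)"
    have "1 \<le> d" unfolding d_def by simp
    hence "\<eta> \<le> 1" using assms(2) divide_le_eq_1[of 1 d] unfolding d_def[symmetric] by linarith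
    obtain c where c: "0 < c" "c \<le> 1" and freq: "\<exists>\<^sub>F Q in sequentially.
        badly_approximable_upto \<alpha> (real Q) (c * real Q powr (- max \<omega> (1 / d)))"
      using frequently_badly_approximable_if_not_tendsto[of \<omega> \<alpha> "max \<omega> (1 / d)"]
        \<open>\<alpha> \<notin> Sset \<omega>\<close> \<open>\<alpha> \<in> Kset\<close> unfolding Sset_def by auto
    have "closure {\<bar>real_of_int q\<bar> powr \<eta> *\<^sub>R (real_of_int q *\<^sub>R \<alpha> - p) | q p. q \<noteq> 0 \<and> p \<in> intvecs}
            = UNIV"
      using closure_eq_UNIV_if_frequently_badly_approximable[OF \<open>0 < \<eta>\<close> \<open>\<eta> \<le> 1\<close> c _ _ freq]
        max_inverse_exponent_bounds[OF \<open>1 \<le> d\<close> \<open>0 < \<eta>\<close> _ assms(4)[folded d_def]] assms(2)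
      unfolding d_def by blast
    hence "\<alpha> \<in> Dset \<eta>" by (rule in_Dset_if_closure_eq_UNIV)
    with \<open>\<alpha> \<notin> Dset \<eta>\<close> show False by contradiction
  qed
qed

end
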